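(* Let $(\dot I_0,\dot d_0,\dot z_1,\dot z_2,\dot z_3)\in\mathbb C^5$ and $a,b,F\in\mathbb C$ with $F\ne0$. Then every nonzero $\mathcal L$-submodule $M$ of $V(\dot I_0,\dot d_0,\dot z_1,\dot z_2,\dot z_3)\otimes A(a,b;F)$ contains $\bar w\otimes x^k$ for some $k\in\mathbb Z$, where $\bar w$ is a highest weight vector of $V(\dot I_0,\dot d_0,\dot z_1,\dot z_2,\dot z_3)$.
   Context: $\mathcal{L}$ has basis $\{d_n,I_n,z_1,z_2,z_3\mid n\in\mathbb{Z}\}$ with brackets $[d_n,d_m]=(m-n)d_{m+n}+\delta_{n,-m}\frac{n^3-n}{12}z_1$, $[d_n,I_m]=mI_{m+n}+\delta_{n,-m}(n^2+n)z_2$, $[I_n,I_m]=n\delta_{n,-m}z_3$, $z_i$ central. $V(\dot I_0,\dot d_0,\dot z_1,\dot z_2,\dot z_3)$ is the simple quotient of the Verma module $U(\mathcal L)/\mathcal I$, where $\mathcal I$ is the left ideal generated by $d_n,I_n$ ($n\in\mathbb N$), $d_0-\dot d_0$, $I_0-\dot I_0$, $z_i-\dot z_i$; $\bar w$ is the image of $1+\mathcal I$. $A(a,b;F)=\mathbb{C}[x,x^{-1}]$ with $z_1=z_2=z_3=0$, $d_nx^m=(a+m+nb)x^{m+n}$, $I_nx^m=Fx^{m+n}$. *)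

theory Defs
  imports "HOL-Analysis.Analysis"
begin

datatype Lbasis = Ld int | LI int | Lz1 | Lz2 | Lz3

text \<open>Given an action rho of the basis on a complex vector space (scalar multiplication sc),
  brL sc rho x y v is rho([x,y]) v, computed from the structure constants of L.\<close>
fun brL :: "(complex \<Rightarrow> 'v::ab_group_add \<Rightarrow> 'v) \<Rightarrow> (Lbasis \<Rightarrow> 'v \<Rightarrow> 'v)
             \<Rightarrow> Lbasis \<Rightarrow> Lbasis \<Rightarrow> 'v \<Rightarrow> 'v" where
  "brL sc rho (Ld n) (Ld m) v =
     sc (of_int (m - n)) (rho (Ld (m + n)) v)
     + (if n = - m then sc (of_int (n^3 - n) / 12) (rho Lz1 v) else 0)"
| "brL sc rho (Ld n) (LI m) v =
     sc (of_int m) (rho (LI (m + n)) v)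
     + (if n = - m then sc (of_int (n^2 + n)) (rho Lz2 v) else 0)"
| "brL sc rho (LI m) (Ld n) v =
     - (sc (of_int m) (rho (LI (m + n)) v)
        + (if n = - m then sc (of_int (n^2 + n)) (rho Lz2 v) else 0))"
| "brL sc rho (LI n) (LI m) v =
     (if n = - m then sc (of_int n) (rho Lz3 v) else 0)"
| "brL sc rho _ _ v = 0"

definition is_L_module :: "(complex \<Rightarrow> 'v::ab_group_add \<Rightarrow> 'v) \<Rightarrow> (Lbasis \<Rightarrow> 'v \<Rightarrow> 'v) \<Rightarrow> bool" where
  "is_L_module sc rho \<longleftrightarrow>
     vector_space sc \<and>
     (\<forall>x. Vector_Spaces.linear sc sc (rho x)) \<and>
     (\<forall>x y v. rho x (rho y v) - rho y (rho x v) = brL sc rho x y v)"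

definition is_L_submodule ::
  "(complex \<Rightarrow> 'v::ab_group_add \<Rightarrow> 'v) \<Rightarrow> (Lbasis \<Rightarrow> 'v \<Rightarrow> 'v) \<Rightarrow> 'v set \<Rightarrow> bool" where
  "is_L_submodule sc rho S \<longleftrightarrow>
     0 \<in> S \<and> (\<forall>u\<in>S. \<forall>v\<in>S. u + v \<in> S) \<and> (\<forall>c. \<forall>u\<in>S. sc c u \<in> S) \<and>
     (\<forall>x. \<forall>u\<in>S. rho x u \<in> S)"

definition is_simple_L_module :: "(complex \<Rightarrow> 'v::ab_group_add \<Rightarrow> 'v) \<Rightarrow> (Lbasis \<Rightarrow> 'v \<Rightarrow> 'v) \<Rightarrow> bool" where
  "is_simple_L_module sc rho \<longleftrightarrow>
     is_L_module sc rho \<and> (\<exists>v::'v. v \<noteq> 0) \<and>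
     (\<forall>S. is_L_submodule sc rho S \<longrightarrow> S = {0} \<or> S = UNIV)"

definition is_hw_vector ::
  "(complex \<Rightarrow> 'v::ab_group_add \<Rightarrow> 'v) \<Rightarrow> (Lbasis \<Rightarrow> 'v \<Rightarrow> 'v)
   \<Rightarrow> complex \<Rightarrow> complex \<Rightarrow> complex \<Rightarrow> complex \<Rightarrow> complex \<Rightarrow> 'v \<Rightarrow> bool" where
  "is_hw_vector sc rho I0 d0 z1 z2 z3 w \<longleftrightarrow>
     w \<noteq> 0 \<and>
     (\<forall>n>0. rho (Ld n) w = 0 \<and> rho (LI n) w = 0) \<and>
     rho (Ld 0) w = sc d0 w \<and> rho (LI 0) w = sc I0 w \<and>
     rho Lz1 w = sc z1 w \<and> rho Lz2 w = sc z2 w \<and> rho Lz3 w = sc z3 w"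

text \<open>The tensor product V \<otimes> A(a,b;F), with A = C[x,x^-1], is modelled as the finitely
  supported functions f : Z \<Rightarrow> V, f standing for the sum over m of f m \<otimes> x^m.\<close>
definition tensA_carrier :: "(int \<Rightarrow> 'v::zero) set" where
  "tensA_carrier = {f. finite {m. f m \<noteq> 0}}"

text \<open>Action on V \<otimes> A(a,b;F):  y(v \<otimes> x^m) = (y v) \<otimes> x^m + v \<otimes> (y x^m), where on A:
  d_n x^m = (a+m+nb) x^(m+n), I_n x^m = F x^(m+n), z_i act by 0.\<close>
fun tensA_act :: "(complex \<Rightarrow> 'v::ab_group_add \<Rightarrow> 'v) \<Rightarrow> (Lbasis \<Rightarrow> 'v \<Rightarrow> 'v)
     \<Rightarrow> complex \<Rightarrow> complex \<Rightarrow> complex \<Rightarrow> Lbasis \<Rightarrow> (int \<Rightarrow> 'v) \<Rightarrow> (int \<Rightarrow> 'v)" where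
  "tensA_act sc rho a b F (Ld n) f =
     (\<lambda>m. rho (Ld n) (f m) + sc (a + of_int (m - n) + of_int n * b) (f (m - n)))"
| "tensA_act sc rho a b F (LI n) f =
     (\<lambda>m. rho (LI n) (f m) + sc F (f (m - n)))"
| "tensA_act sc rho a b F y f = (\<lambda>m. rho y (f m))"

definition is_tensA_submodule ::
  "(complex \<Rightarrow> 'v::ab_group_add \<Rightarrow> 'v) \<Rightarrow> (Lbasis \<Rightarrow> 'v \<Rightarrow> 'v)
   \<Rightarrow> complex \<Rightarrow> complex \<Rightarrow> complex \<Rightarrow> (int \<Rightarrow> 'v) set \<Rightarrow> bool" where
  "is_tensA_submodule sc rho a b F M \<longleftrightarrow>
     M \<subseteq> tensA_carrier \<and> (\<lambda>m. 0) \<in> M \<and>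
     (\<forall>f\<in>M. \<forall>g\<in>M. (\<lambda>m. f m + g m) \<in> M) \<and>
     (\<forall>c. \<forall>f\<in>M. (\<lambda>m. sc c (f m)) \<in> M) \<and>
     (\<forall>y. \<forall>f\<in>M. tensA_act sc rho a b F y f \<in> M)"

definition pure_tens :: "'v::zero \<Rightarrow> int \<Rightarrow> (int \<Rightarrow> 'v)" where
  "pure_tens w k = (\<lambda>m. if m = k then w else 0)"

end

theory Submission
  imports Defs
begin

text \<open>
  Since V is simple and generated by a highest weight vector, every vector of V is killed by
  d_n and I_n for all large n. Hence, for f in M and n large, I_n and d_n act on f only
  through the factor A: I_n f = F x^n f and d_n f = x^n (a + nb + x d/dx) f. As F \<noteq> 0, the
  set C of those g with x^n g \<in> M for some n is closed under multiplication by x^(\<plusminus>1), under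
  the degree operator x d/dx, and therefore also under the pointwise action of L on V.
  Applying a suitable polynomial in x d/dx to a nonzero f in M isolates a single pure tensor
  u \<otimes> x^k \<in> C with u \<noteq> 0. The vectors u with u \<otimes> x^k \<in> C form a nonzero submodule of V,
  hence all of V; in particular w \<otimes> x^k \<in> C, and a shift brings it back into M.
\<close>

lemma eventually_at_top_add_int:
  fixes k :: int
  assumes "eventually P at_top"
  shows "eventually (\<lambda>n. P (n + k)) at_top"
proof -
  from assms obtain N where "\<forall>n\<ge>N. P n" by (auto simp: eventually_at_top_linorder)
  then have "\<forall>n\<ge>N - k. P (n + k)" by auto
  then show ?thesis by (auto simp: eventually_at_top_linorder)
qed

locale L_module = vector_space sc for sc :: "complex \<Rightarrow> 'v::ab_group_add \<Rightarrow> 'v" +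
  fixes rho :: "Lbasis \<Rightarrow> 'v \<Rightarrow> 'v"
  assumes linear_rho: "Vector_Spaces.linear sc sc (rho x)"
    and rho_commutator: "rho x (rho y v) - rho y (rho x v) = brL sc rho x y v"
begin

lemma rho_zero [simp]: "rho x 0 = 0"
  using linear_rho[of x] by (metis module_hom.zero module_hom_iff_linear)

lemma rho_add: "rho x (u + v) = rho x u + rho x v"
  using linear_rho[of x] by (metis module_hom.add module_hom_iff_linear)

lemma rho_scale: "rho x (sc c u) = sc c (rho x u)"
  using linear_rho[of x] by (metis module_hom.scale module_hom_iff_linear)

lemma rho_rho: "rho x (rho y v) = rho y (rho x v) + brL sc rho x y v"
  using rho_commutator by (metis diff_add_cancel add.commute)

definition annihilated_by_high_modes :: "'v \<Rightarrow> bool" where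
  "annihilated_by_high_modes v \<longleftrightarrow>
     (\<forall>\<^sub>F n in at_top. rho (Ld n) v = 0 \<and> rho (LI n) v = 0)"

lemma is_L_submodule_annihilated_by_high_modes:
  "is_L_submodule sc rho {v. annihilated_by_high_modes v}"
  unfolding is_L_submodule_def Ball_def mem_Collect_eq annihilated_by_high_modes_def
proof (intro conjI allI impI)
  fix u v
  assume "\<forall>\<^sub>F n in at_top. rho (Ld n) u = 0 \<and> rho (LI n) u = 0"
    and "\<forall>\<^sub>F n in at_top. rho (Ld n) v = 0 \<and> rho (LI n) v = 0"
  then show "\<forall>\<^sub>F n in at_top. rho (Ld n) (u + v) = 0 \<and> rho (LI n) (u + v) = 0"
    by eventually_elim (simp add: rho_add)
next
  fix c u
  assume "\<forall>\<^sub>F n in at_top. rho (Ld n) u = 0 \<and> rho (LI n) u = 0"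
  then show "\<forall>\<^sub>F n in at_top. rho (Ld n) (sc c u) = 0 \<and> rho (LI n) (sc c u) = 0"
    by eventually_elim (simp add: rho_scale)
next
  fix x u
  assume u: "\<forall>\<^sub>F n in at_top. rho (Ld n) u = 0 \<and> rho (LI n) u = 0"
  show "\<forall>\<^sub>F n in at_top. rho (Ld n) (rho x u) = 0 \<and> rho (LI n) (rho x u) = 0"
  proof (cases x)
    case (Ld k)
    from u eventually_at_top_add_int[OF u, of k] eventually_gt_at_top[of "\<bar>k\<bar>"]
    show ?thesis
      by eventually_elim (auto simp: Ld rho_rho[of "Ld _"] rho_rho[of "LI _"] add.commute)
  next
    case (LI k)
    from u eventually_at_top_add_int[OF u, of k] eventually_gt_at_top[of "\<bar>k\<bar>"]
    show ?thesis
      by eventually_elim (auto simp: LI rho_rho[of "Ld _"] rho_rho[of "LI _"] add.commute)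
  qed (use u in \<open>auto simp: rho_rho[of "Ld _"] rho_rho[of "LI _"] elim: eventually_mono\<close>)
qed simp

lemma annihilated_by_high_modes_if_simple:
  assumes simple: "\<And>S. is_L_submodule sc rho S \<Longrightarrow> S = {0} \<or> S = UNIV"
    and "annihilated_by_high_modes w" "w \<noteq> 0"
  shows "annihilated_by_high_modes v"
  using simple[OF is_L_submodule_annihilated_by_high_modes] assms(2,3) by auto

end

lemma L_module_if_is_L_module: "is_L_module sc rho \<Longrightarrow> L_module sc rho"
  unfolding is_L_module_def L_module_def L_module_axioms_def by auto

definition shift :: "int \<Rightarrow> (int \<Rightarrow> 'v) \<Rightarrow> int \<Rightarrow> 'v" where
  "shift n g = (\<lambda>m. g (m - n))"

lemma shift_shift [simp]: "shift k (shift n g) = shift (k + n) g"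
  unfolding shift_def by (simp add: algebra_simps)

lemma shift_0 [simp]: "shift 0 g = g"
  unfolding shift_def by simp

definition (in L_module) euler :: "(int \<Rightarrow> 'v) \<Rightarrow> int \<Rightarrow> 'v" where
  "euler g = (\<lambda>m. sc (of_int m) (g m))"

locale tensA_submodule = L_module sc rho for sc :: "complex \<Rightarrow> 'v::ab_group_add \<Rightarrow> 'v" and rho +
  fixes a b F :: complex
    and M :: "(int \<Rightarrow> 'v) set"
  assumes F_nonzero: "F \<noteq> 0"
    and submodule: "is_tensA_submodule sc rho a b F M"
    and restricted: "annihilated_by_high_modes v"
begin

lemma zero_mem: "(\<lambda>m. 0) \<in> M"
  using submodule unfolding is_tensA_submodule_def by auto

lemma finite_support: "f \<in> M \<Longrightarrow> finite {m. f m \<noteq> 0}"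
  using submodule unfolding is_tensA_submodule_def tensA_carrier_def by auto

lemma act_mem: "f \<in> M \<Longrightarrow> tensA_act sc rho a b F y f \<in> M"
  using submodule unfolding is_tensA_submodule_def by auto

lemma lincomb_mem: "f \<in> M \<Longrightarrow> g \<in> M \<Longrightarrow> (\<lambda>m. f m + sc c (g m)) \<in> M"
  using submodule unfolding is_tensA_submodule_def by simp

lemma eventually_high_modes_annihilate:
  assumes "f \<in> M"
  shows "\<forall>\<^sub>F n in at_top. \<forall>m. rho (Ld n) (f m) = 0 \<and> rho (LI n) (f m) = 0"
proof -
  have "range f \<subseteq> insert 0 (f ` {m. f m \<noteq> 0})" by auto
  then have "finite (range f)"
    using finite_support[OF assms] by (meson finite_imageI finite_insert finite_subset)
  moreover have "\<forall>v\<in>range f. \<forall>\<^sub>F n in at_top. rho (Ld n) v = 0 \<and> rho (LI n) v = 0"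
    using restricted unfolding annihilated_by_high_modes_def by blast
  ultimately have "\<forall>\<^sub>F n in at_top. \<forall>v\<in>range f. rho (Ld n) v = 0 \<and> rho (LI n) v = 0"
    by (rule eventually_ball_finite)
  then show ?thesis by (rule eventually_mono) auto
qed

text \<open>For large n the modes I_n and d_n kill every value of f, so they act through A alone.\<close>
lemma eventually_shift_mem:
  assumes f: "f \<in> M"
  shows "\<forall>\<^sub>F n in at_top. shift n f \<in> M \<and> shift n (euler f) \<in> M"
  using eventually_high_modes_annihilate[OF f]
proof eventually_elim
  case (elim n)
  have "shift n f = (\<lambda>m. 0 + sc (1 / F) (tensA_act sc rho a b F (LI n) f m))"
    using elim F_nonzero by (simp add: shift_def)
  then have shift: "shift n f \<in> M"
    using lincomb_mem[OF zero_mem act_mem[OF f]] by metis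
  have "shift n (euler f)
      = (\<lambda>m. tensA_act sc rho a b F (Ld n) f m + sc (- (a + of_int n * b)) (shift n f m))"
  proof
    fix m
    have "a + of_int (m - n) + of_int n * b + - (a + of_int n * b) = of_int (m - n)"
      by simp
    then show "shift n (euler f) m
        = tensA_act sc rho a b F (Ld n) f m + sc (- (a + of_int n * b)) (shift n f m)"
      using elim by (simp add: shift_def euler_def scale_left_distrib[symmetric])
  qed
  then have "shift n (euler f) \<in> M"
    using lincomb_mem[OF act_mem[OF f] shift] by metis
  with shift show ?case ..
qed

definition shift_closure :: "(int \<Rightarrow> 'v) set" where
  "shift_closure = {g. \<exists>n. shift n g \<in> M}"

lemma shift_mem_shift_closure_iff [simp]:
  "shift k g \<in> shift_closure \<longleftrightarrow> g \<in> shift_closure"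
  unfolding shift_closure_def mem_Collect_eq by (metis shift_shift diff_add_cancel)

lemma mem_shift_closure_if_mem: "f \<in> M \<Longrightarrow> f \<in> shift_closure"
  unfolding shift_closure_def by (auto intro: exI[of _ 0])

lemma eventually_shift_mem_if_mem_shift_closure:
  assumes "g \<in> shift_closure"
  shows "\<forall>\<^sub>F n in at_top. shift n g \<in> M"
proof -
  obtain n0 where "shift n0 g \<in> M" using assms unfolding shift_closure_def by auto
  from eventually_shift_mem[OF this] have "\<forall>\<^sub>F n in at_top. shift n (shift n0 g) \<in> M"
    by (rule eventually_mono) simp
  from eventually_at_top_add_int[OF this, of "- n0"] show ?thesis by simp
qed

lemma lincomb_mem_shift_closure:
  assumes "f \<in> shift_closure" "g \<in> shift_closure"
  shows "(\<lambda>m. f m + sc c (g m)) \<in> shift_closure"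
proof -
  have "\<forall>\<^sub>F n in at_top. shift n f \<in> M \<and> shift n g \<in> M"
    using assms by (intro eventually_conj eventually_shift_mem_if_mem_shift_closure)
  from eventually_happens'[OF trivial_limit_at_top_linorder this]
  obtain n where "shift n f \<in> M" "shift n g \<in> M" by blast
  then have "shift n (\<lambda>m. f m + sc c (g m)) \<in> M"
    using lincomb_mem by (simp add: shift_def)
  then show ?thesis unfolding shift_closure_def by blast
qed

lemma euler_mem_shift_closure:
  assumes "g \<in> shift_closure"
  shows "euler g \<in> shift_closure"
proof -
  obtain n0 where f: "shift n0 g \<in> M" using assms unfolding shift_closure_def by auto
  from eventually_happens'[OF trivial_limit_at_top_linorder eventually_shift_mem[OF f]]
  obtain n where "shift n (euler (shift n0 g)) \<in> M" by blast
  then have "euler (shift n0 g) \<in> shift_closure"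
    unfolding shift_closure_def by blast
  then have "shift (- n0) (euler (shift n0 g)) \<in> shift_closure"
    by simp
  moreover have "euler g = (\<lambda>m. shift (- n0) (euler (shift n0 g)) m + sc (- of_int n0) (g m))"
    by (simp add: shift_def euler_def scale_left_distrib)
  ultimately show ?thesis
    using lincomb_mem_shift_closure[OF _ assms] by metis
qed

lemma scale_mem_shift_closure:
  "g \<in> shift_closure \<Longrightarrow> (\<lambda>m. sc c (g m)) \<in> shift_closure"
  using lincomb_mem_shift_closure[OF mem_shift_closure_if_mem[OF zero_mem]] by simp

text \<open>The part of y f coming from the factor A lies in the shift closure, hence so does
  the remaining part, the pointwise action of y on the values of f.\<close>
lemma rho_mem_shift_closure_if_mem:
  assumes f: "f \<in> M"
  shows "(\<lambda>m. rho y (f m)) \<in> shift_closure"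
proof -
  have f': "f \<in> shift_closure" using mem_shift_closure_if_mem[OF f] .
  have act: "tensA_act sc rho a b F y f \<in> shift_closure"
    using mem_shift_closure_if_mem[OF act_mem[OF f]] .
  show ?thesis
  proof (cases y)
    case (Ld k)
    define g where "g = (\<lambda>m. sc (a + of_int m + of_int k * b) (f m))"
    have "g = (\<lambda>m. euler f m + sc (a + of_int k * b) (f m))"
      by (simp add: g_def euler_def scale_left_distrib[symmetric] add_ac)
    then have "shift k g \<in> shift_closure"
      using lincomb_mem_shift_closure[OF euler_mem_shift_closure[OF f'] f'] by simp
    moreover have "tensA_act sc rho a b F y f = (\<lambda>m. rho y (f m) + shift k g m)"
      by (simp add: Ld g_def shift_def)
    then have "(\<lambda>m. rho y (f m))
        = (\<lambda>m. tensA_act sc rho a b F y f m + sc (- 1) (shift k g m))"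
      by simp
    ultimately show ?thesis using lincomb_mem_shift_closure[OF act] by metis
  next
    case (LI k)
    have "(\<lambda>m. rho y (f m))
        = (\<lambda>m. tensA_act sc rho a b F y f m + sc (- F) (shift k f m))"
      by (simp add: LI shift_def)
    then show ?thesis
      using lincomb_mem_shift_closure[OF act] f' shift_mem_shift_closure_iff by metis
  qed (use act in simp_all)
qed

lemma rho_mem_shift_closure:
  assumes "g \<in> shift_closure"
  shows "(\<lambda>m. rho y (g m)) \<in> shift_closure"
proof -
  obtain n where "shift n g \<in> M" using assms unfolding shift_closure_def by auto
  from rho_mem_shift_closure_if_mem[OF this, of y]
  have "shift n (\<lambda>m. rho y (g m)) \<in> shift_closure" by (simp add: shift_def)
  then show ?thesis by simp
qed

lemma poly_euler_mem_shift_closure: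
  assumes "finite T" "g \<in> shift_closure"
  shows "(\<lambda>m. sc (\<Prod>t\<in>T. of_int m - of_int t) (g m)) \<in> shift_closure"
  using assms(1)
proof (induction T rule: finite_induct)
  case empty
  then show ?case using assms(2) by simp
next
  case (insert t T)
  define h where "h = (\<lambda>m. sc (\<Prod>t\<in>T. of_int m - of_int t) (g m))"
  have "sc ((of_int m - of_int t) * P) x = sc (of_int m) (sc P x) + sc (- of_int t) (sc P x)"
    for m P x
    by (simp add: scale_left_diff_distrib left_diff_distrib)
  then have "(\<lambda>m. sc (\<Prod>t\<in>insert t T. of_int m - of_int t) (g m))
      = (\<lambda>m. euler h m + sc (- of_int t) (h m))"
    using insert.hyps by (simp add: h_def euler_def scale_left_distrib[symmetric])
  then show ?case
    using lincomb_mem_shift_closure[OF euler_mem_shift_closure] insert.IH h_def by metis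
qed

text \<open>The polynomial \<Prod>(x d/dx - t) over the other degrees t of the support of f
  kills every component of f except the one of degree k.\<close>
lemma pure_tens_mem_shift_closure:
  assumes f: "f \<in> M"
  shows "pure_tens (f k) k \<in> shift_closure"
proof -
  define T where "T = {m. f m \<noteq> 0} - {k}"
  have T: "finite T" using finite_support[OF f] by (simp add: T_def)
  define c where "c = (\<Prod>t\<in>T. of_int k - of_int t :: complex)"
  have "c \<noteq> 0" using T by (simp add: c_def T_def)
  have "pure_tens (f k) k = (\<lambda>m. sc (1 / c) (sc (\<Prod>t\<in>T. of_int m - of_int t) (f m)))"
  proof
    fix m
    show "pure_tens (f k) k m = sc (1 / c) (sc (\<Prod>t\<in>T. of_int m - of_int t) (f m))"
    proof (cases "m = k \<or> f m = 0")
      case True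
      with \<open>c \<noteq> 0\<close> show ?thesis by (auto simp: pure_tens_def c_def)
    next
      case False
      then have "m \<in> T" by (simp add: T_def)
      with T False show ?thesis by (simp add: pure_tens_def prod_zero_iff)
    qed
  qed
  then show ?thesis
    using scale_mem_shift_closure[OF poly_euler_mem_shift_closure[OF T mem_shift_closure_if_mem[OF f]]]
    by metis
qed

lemma is_L_submodule_pure_tens_mem_shift_closure:
  "is_L_submodule sc rho {u. pure_tens u k \<in> shift_closure}"
  unfolding is_L_submodule_def Ball_def mem_Collect_eq
proof (intro conjI allI impI)
  have "pure_tens (0::'v) k = (\<lambda>m. 0)" by (auto simp: pure_tens_def)
  then show "pure_tens 0 k \<in> shift_closure"
    using mem_shift_closure_if_mem[OF zero_mem] by simp
next
  fix u v
  assume "pure_tens u k \<in> shift_closure" "pure_tens v k \<in> shift_closure"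
  moreover have "(\<lambda>m. pure_tens u k m + sc 1 (pure_tens v k m)) = pure_tens (u + v) k"
    by (auto simp: pure_tens_def)
  ultimately show "pure_tens (u + v) k \<in> shift_closure"
    using lincomb_mem_shift_closure by metis
next
  fix c u
  assume "pure_tens u k \<in> shift_closure"
  moreover have "(\<lambda>m. sc c (pure_tens u k m)) = pure_tens (sc c u) k"
    by (auto simp: pure_tens_def)
  ultimately show "pure_tens (sc c u) k \<in> shift_closure"
    using scale_mem_shift_closure by metis
next
  fix x u
  assume "pure_tens u k \<in> shift_closure"
  moreover have "(\<lambda>m. rho x (pure_tens u k m)) = pure_tens (rho x u) k"
    by (auto simp: pure_tens_def)
  ultimately show "pure_tens (rho x u) k \<in> shift_closure"
    using rho_mem_shift_closure by metis
qed

lemma exists_pure_tens_mem: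
  assumes simple: "\<And>S. is_L_submodule sc rho S \<Longrightarrow> S = {0} \<or> S = UNIV"
    and "f \<in> M" "f \<noteq> (\<lambda>m. 0)"
  shows "\<exists>k. pure_tens v k \<in> M"
proof -
  obtain k where "f k \<noteq> 0" using assms(3) by auto
  moreover have "f k \<in> {u. pure_tens u k \<in> shift_closure}"
    using pure_tens_mem_shift_closure[OF assms(2)] by simp
  ultimately have "pure_tens v k \<in> shift_closure"
    using simple[OF is_L_submodule_pure_tens_mem_shift_closure] by auto
  then obtain n where "shift n (pure_tens v k) \<in> M" unfolding shift_closure_def by auto
  moreover have "shift n (pure_tens v k) = pure_tens v (k + n)"
    by (auto simp: shift_def pure_tens_def)
  ultimately show ?thesis by auto
qed

end

theorem lemma19:
  fixes sc :: "complex \<Rightarrow> 'v::ab_group_add \<Rightarrow> 'v"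
    and rho :: "Lbasis \<Rightarrow> 'v \<Rightarrow> 'v"
    and I0 d0 z1 z2 z3 a b F :: complex
    and w :: 'v
    and M :: "(int \<Rightarrow> 'v) set"
  assumes "is_simple_L_module sc rho"
    and "is_hw_vector sc rho I0 d0 z1 z2 z3 w"
    and "F \<noteq> 0"
    and "is_tensA_submodule sc rho a b F M"
    and "\<exists>f\<in>M. f \<noteq> (\<lambda>m. 0)"
  shows "\<exists>k::int. pure_tens w k \<in> M"
proof -
  interpret L_module sc rho
    using assms(1) L_module_if_is_L_module unfolding is_simple_L_module_def by blast
  have simple: "\<And>S. is_L_submodule sc rho S \<Longrightarrow> S = {0} \<or> S = UNIV"
    using assms(1) unfolding is_simple_L_module_def by blast
  have hw: "w \<noteq> 0" "\<forall>n>0. rho (Ld n) w = 0 \<and> rho (LI n) w = 0"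
    using assms(2) unfolding is_hw_vector_def by auto
  have "annihilated_by_high_modes w"
    unfolding annihilated_by_high_modes_def using eventually_gt_at_top[of "0::int"]
    by (rule eventually_mono) (use hw in blast)
  then have "annihilated_by_high_modes v" for v
    using annihilated_by_high_modes_if_simple[OF simple _ hw(1)] by blast
  then interpret tensA_submodule sc rho a b F M
    using assms(3,4) by unfold_locales
  show ?thesis
    using exists_pure_tens_mem[OF simple] assms(5) by blast
qed

end
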